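(* Let $n\ge 1$ be an integer and $q\in\mathbb{C}$. The discriminant in $x$ of $K_n(x,q)=(1+x)^{2n}+qx^{n}$ is \[ \Delta_x\big(K_n(x,q)\big)=n^{2n}q^{2n-1}\,(q+2^{2n}). \]
   Context: For a polynomial $P(x)$ of degree $d$ with leading coefficient $a_d$ and roots $x_1,\dots,x_d$ (with multiplicity), its discriminant is $\Delta_x P=a_d^{2d-2}\prod_{1\le i<j\le d}(x_i-x_j)^2$. Here $K_n(x,q)$ is regarded as a monic polynomial of degree $2n$ in $x$. *)

theory Defs
  imports "HOL-Computational_Algebra.Computational_Algebra"
begin

text \<open>Discriminant of a complex polynomial of degree d with leading coefficient a_d
  and roots x_1..x_d (listed with multiplicity):
  a_d^(2d-2) * product over i<j of (x_i - x_j)^2.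
  The list of roots is any enumeration of the root multiset proots p
  (the product is symmetric, so the choice does not matter).\<close>
definition discriminant :: "complex poly \<Rightarrow> complex" where
  "discriminant p =
     (let rs = (SOME rs. mset rs = proots p); d = degree p in
       lead_coeff p ^ (2 * d - 2) *
       (\<Prod>j<length rs. \<Prod>i<j. (rs ! i - rs ! j) ^ 2))"

definition K_poly :: "nat \<Rightarrow> complex \<Rightarrow> complex poly" where
  "K_poly n q = [:1, 1:] ^ (2 * n) + monom q n"

end

theory Submission
  imports Defs
begin

text \<open>For a monic \<open>p\<close> with roots \<open>r_1, ..., r_d\<close> one has \<open>p'(r_i) = \<Prod>j\<noteq>i. (r_i - r_j)\<close>, so the
  discriminant is \<open>\<plusminus>\<Prod>i. p'(r_i)\<close>. For \<open>p = K_n(x, q)\<close> the relation \<open>(1 + x)^(2n) = -q x^n\<close>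
  at a root \<open>x\<close> turns \<open>x (1 + x) p'(x)\<close> into \<open>n q x^n (1 - x)\<close>, and the products of \<open>x\<close>,
  \<open>1 + x\<close> and \<open>1 - x\<close> over all roots are \<open>p(0)\<close>, \<open>p(-1)\<close> and \<open>p(1)\<close> up to sign. This gives
  \<open>q \<Delta> = n^(2n) q^(2n) (q + 2^(2n))\<close>; for \<open>q = 0\<close> the root \<open>-1\<close> is multiple and both sides vanish.\<close>

lemma poly_pderiv_prod_linear_factors:
  fixes r :: "nat \<Rightarrow> 'a::idom"
  assumes "i < d"
  shows "poly (pderiv (\<Prod>j<d. [:-r j, 1:])) (r i) = (\<Prod>j\<in>{..<d}-{i}. r i - r j)"
proof -
  have vanish: "(\<Prod>j\<in>{..<d}-{k}. r i - r j) = 0" if "k \<in> {..<d} - {i}" for k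
    using that assms by (intro prod_zero) auto
  have "poly (pderiv (\<Prod>j<d. [:-r j, 1:])) (r i) = (\<Sum>k<d. \<Prod>j\<in>{..<d}-{k}. r i - r j)"
    by (simp add: pderiv_prod poly_sum poly_prod pderiv_pCons)
  also have "\<dots> = (\<Prod>j\<in>{..<d}-{i}. r i - r j)"
    using assms by (subst sum.remove[of _ i]) (simp_all add: vanish)
  finally show ?thesis .
qed

lemma prod_off_diagonal_eq_prod_pairs:
  fixes f :: "nat \<Rightarrow> nat \<Rightarrow> 'a::comm_monoid_mult"
  shows "(\<Prod>i<d. \<Prod>j\<in>{..<d}-{i}. f i j) = (\<Prod>j<d. \<Prod>i<j. f i j * f j i)"
proof (induction d)
  case 0
  then show ?case by simp
next
  case (Suc d)
  have insert_d: "{..<Suc d} - {i} = insert d ({..<d} - {i})" if "i < d" for i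
    using that by auto
  have "(\<Prod>i<Suc d. \<Prod>j\<in>{..<Suc d}-{i}. f i j)
      = (\<Prod>i<d. \<Prod>j\<in>{..<Suc d}-{i}. f i j) * (\<Prod>j\<in>{..<Suc d}-{d}. f d j)"
    by simp
  also have "{..<Suc d} - {d} = {..<d}"
    by auto
  also have "(\<Prod>i<d. \<Prod>j\<in>{..<Suc d}-{i}. f i j) = (\<Prod>i<d. f i d * (\<Prod>j\<in>{..<d}-{i}. f i j))"
    by (rule prod.cong) (simp_all add: insert_d)
  finally show ?case
    using Suc by (simp add: prod.distrib mult_ac)
qed

lemma prod_alternating_signs:
  "(\<Prod>j<d. (-1::'a::comm_ring_1) ^ j) = (-1) ^ (d * (d - 1) div 2)"
  by (simp add: power_sum [symmetric] lessThan_atLeast0 Sum_Ico_nat)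

lemma prod_mset_power_distrib:
  fixes f :: "'b \<Rightarrow> 'a::comm_monoid_mult"
  shows "(\<Prod>x\<in>#A. f x ^ k) = (\<Prod>x\<in>#A. f x) ^ k"
  by (induction A) (simp_all add: power_mult_distrib)

lemma prod_mset_neg:
  fixes f :: "'b \<Rightarrow> 'a::comm_ring_1"
  shows "(\<Prod>x\<in>#A. - f x) = (-1) ^ size A * (\<Prod>x\<in>#A. f x)"
  by (induction A) simp_all

lemma poly_eq_lead_coeff_prod_proots:
  fixes p :: "complex poly"
  shows "poly p a = lead_coeff p * (\<Prod>x\<in>#proots p. a - x)"
  by (subst (1) complex_poly_decompose_multiset [symmetric]) (simp add: poly_prod_mset)

lemma monic_discriminant_eq_prod_pderiv_proots:
  fixes p :: "complex poly"
  assumes monic: "lead_coeff p = 1"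
  shows "(\<Prod>x\<in>#proots p. poly (pderiv p) x)
           = (-1) ^ (degree p * (degree p - 1) div 2) * discriminant p"
proof -
  define rs where "rs = (SOME rs. mset rs = proots p)"
  let ?d = "degree p"
  define r where "r i = rs ! i" for i
  have rs: "mset rs = proots p"
    unfolding rs_def by (rule someI_ex) (rule ex_mset)
  have len: "length rs = ?d"
    using rs size_proots_complex[of p] by (metis size_mset)
  have prod_rs: "(\<Prod>x\<in>#proots p. f x) = (\<Prod>i<?d. f (r i))" for f :: "complex \<Rightarrow> 'b::comm_monoid_mult"
    by (simp add: rs [symmetric] prod_mset_prod_list prod.list_conv_set_nth atLeast0LessThan len r_def
        flip: mset_map)
  have p_eq: "p = (\<Prod>i<?d. [:-r i, 1:])"
    using complex_poly_decompose_multiset[of p] monic by (simp add: prod_rs)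
  have disc: "discriminant p = (\<Prod>j<?d. \<Prod>i<j. (r i - r j) ^ 2)"
    unfolding discriminant_def Let_def rs_def [symmetric] monic len r_def by simp
  have "(\<Prod>x\<in>#proots p. poly (pderiv p) x) = (\<Prod>i<?d. \<Prod>j\<in>{..<?d}-{i}. r i - r j)"
    unfolding prod_rs by (subst (1) p_eq) (simp add: poly_pderiv_prod_linear_factors)
  also have "\<dots> = (\<Prod>j<?d. \<Prod>i<j. (r i - r j) * (r j - r i))"
    by (rule prod_off_diagonal_eq_prod_pairs)
  also have "\<dots> = (\<Prod>j<?d. (-1) ^ j * (\<Prod>i<j. (r i - r j) ^ 2))"
  proof (rule prod.cong)
    fix j
    have "(\<Prod>i<j. (r i - r j) * (r j - r i)) = (\<Prod>i<j. - ((r i - r j) ^ 2))"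
      by (rule prod.cong) (simp_all add: power2_eq_square algebra_simps)
    then show "(\<Prod>i<j. (r i - r j) * (r j - r i)) = (-1) ^ j * (\<Prod>i<j. (r i - r j) ^ 2)"
      by (simp add: prod_uminus)
  qed simp
  also have "\<dots> = (-1) ^ (?d * (?d - 1) div 2) * discriminant p"
    by (simp add: prod.distrib prod_alternating_signs disc)
  finally show ?thesis .
qed

lemma degree_K_poly:
  assumes "n \<ge> 1"
  shows "degree (K_poly n q) = 2 * n"
proof -
  have "degree (monom q n) < degree ([:1, 1:] ^ (2 * n) :: complex poly)"
    using assms degree_monom_le[of q n] by (simp add: degree_power_eq)
  then show ?thesis
    unfolding K_poly_def by (simp add: degree_add_eq_left degree_power_eq)
qed

lemma lead_coeff_K_poly:
  assumes "n \<ge> 1"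
  shows "lead_coeff (K_poly n q) = 1"
proof -
  have "coeff ([:1, 1:] ^ (2 * n) :: complex poly) (2 * n) = 1"
    using lead_coeff_power[of "[:1, 1::complex:]" "2 * n"] by (simp add: degree_power_eq)
  then show ?thesis
    using assms by (simp add: degree_K_poly) (simp add: K_poly_def coeff_monom)
qed

lemma poly_K_poly: "poly (K_poly n q) x = (1 + x) ^ (2 * n) + q * x ^ n"
  by (simp add: K_poly_def poly_monom add.commute)

lemma poly_pderiv_K_poly:
  "poly (pderiv (K_poly n q)) x = of_nat (2 * n) * (1 + x) ^ (2 * n - 1) + of_nat n * q * x ^ (n - 1)"
  by (simp add: K_poly_def pderiv_add pderiv_power pderiv_monom poly_monom pderiv_pCons add.commute)

lemma K_poly_root_pderiv_identity:
  assumes "n \<ge> 1" and root: "poly (K_poly n q) x = 0"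
  shows "x * (1 + x) * poly (pderiv (K_poly n q)) x = of_nat n * q * x ^ n * (1 - x)"
proof -
  obtain m where n: "n = Suc m"
    using assms(1) by (cases n) auto
  have "(1 + x) * (1 + x) ^ (2 * m + 1) = - q * x * x ^ m"
    using root by (simp add: poly_K_poly n eq_neg_iff_add_eq_0 mult.assoc)
  moreover have "x * (1 + x) * poly (pderiv (K_poly n q)) x
      = of_nat (2 * n) * x * ((1 + x) * (1 + x) ^ (2 * m + 1)) + of_nat n * q * x * x ^ m * (1 + x)"
    by (simp add: poly_pderiv_K_poly n algebra_simps)
  ultimately show ?thesis
    by (simp add: n algebra_simps)
qed

lemma prod_proots_K_poly:
  assumes "n \<ge> 1"
  shows "\<Prod>\<^sub># (proots (K_poly n q)) = 1"
    and "(\<Prod>x\<in>#proots (K_poly n q). 1 + x) = (-1) ^ n * q"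
    and "(\<Prod>x\<in>#proots (K_poly n q). 1 - x) = 2 ^ (2 * n) + q"
proof -
  let ?R = "proots (K_poly n q)"
  have size: "size ?R = 2 * n"
    using assms by (simp add: size_proots_complex degree_K_poly)
  have eval: "poly (K_poly n q) a = (\<Prod>x\<in>#?R. a - x)" for a
    using assms by (simp add: poly_eq_lead_coeff_prod_proots lead_coeff_K_poly)
  show "\<Prod>\<^sub># ?R = 1"
    using eval[of 0] assms prod_mset_neg[of "\<lambda>x. x" ?R]
    by (simp add: poly_K_poly size power_mult power_0_left)
  show "(\<Prod>x\<in>#?R. 1 + x) = (-1) ^ n * q"
  proof -
    have "(-1) ^ n * q = poly (K_poly n q) (-1)"
      using assms by (simp add: poly_K_poly power_0_left)
    also have "\<dots> = (\<Prod>x\<in>#?R. - (1 + x))"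
      unfolding eval by (intro arg_cong[where f = prod_mset] image_mset_cong) simp
    also have "\<dots> = (\<Prod>x\<in>#?R. 1 + x)"
      by (simp only: prod_mset_neg size) (simp add: power_mult)
    finally show ?thesis ..
  qed
  show "(\<Prod>x\<in>#?R. 1 - x) = 2 ^ (2 * n) + q"
    using eval[of 1] by (simp add: poly_K_poly)
qed

lemma q_times_discriminant_K_poly:
  assumes "n \<ge> 1"
  shows "q * discriminant (K_poly n q) = of_nat n ^ (2 * n) * q ^ (2 * n) * (q + 2 ^ (2 * n))"
proof -
  let ?p = "K_poly n q"
  let ?R = "proots ?p"
  have sign: "(-1::complex) ^ (2 * n * (2 * n - 1) div 2) = (-1) ^ n"
  proof -
    have odd: "odd (2 * n - 1)"
      using assms by simp
    have "2 * n * (2 * n - 1) div 2 = (2 * n - 1) * n"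
      by simp
    then show ?thesis
      by (simp only: power_mult neg_one_odd_power[OF odd])
  qed
  have pderiv: "(\<Prod>x\<in>#?R. poly (pderiv ?p) x) = (-1) ^ n * discriminant ?p"
    using monic_discriminant_eq_prod_pderiv_proots[OF lead_coeff_K_poly[OF assms]]
    by (simp only: degree_K_poly[OF assms] sign)
  have "q * discriminant ?p = ((-1) ^ n * q) * ((-1) ^ n * discriminant ?p)"
    by (simp add: mult_ac flip: power_add)
  also have "\<dots> = \<Prod>\<^sub># ?R * (\<Prod>x\<in>#?R. 1 + x) * (\<Prod>x\<in>#?R. poly (pderiv ?p) x)"
    using assms by (simp add: prod_proots_K_poly pderiv)
  also have "\<dots> = (\<Prod>x\<in>#?R. x * (1 + x) * poly (pderiv ?p) x)"
    by (simp add: prod_mset.distrib)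
  also have "\<dots> = (\<Prod>x\<in>#?R. of_nat n * q * x ^ n * (1 - x))"
  proof (intro arg_cong[where f = prod_mset] image_mset_cong)
    have "?p \<noteq> 0"
      using lead_coeff_K_poly[OF assms, of q] by auto
    then show "x * (1 + x) * poly (pderiv ?p) x = of_nat n * q * x ^ n * (1 - x)" if "x \<in># ?R" for x
      using that assms by (simp add: K_poly_root_pderiv_identity)
  qed
  also have "\<dots> = of_nat n ^ (2 * n) * q ^ (2 * n) * (q + 2 ^ (2 * n))"
    using assms by (simp add: prod_mset.distrib prod_mset_power_distrib prod_proots_K_poly
        size_proots_complex degree_K_poly power_mult_distrib add.commute)
  finally show ?thesis .
qed

lemma discriminant_K_poly_0:
  assumes "n \<ge> 1"
  shows "discriminant (K_poly n 0) = 0"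
proof -
  let ?p = "K_poly n 0"
  have "?p \<noteq> 0"
    using lead_coeff_K_poly[OF assms, of 0] by auto
  then have "-1 \<in># proots ?p"
    using assms by (simp add: poly_K_poly power_0_left)
  moreover have "poly (pderiv ?p) (-1) = 0"
    using assms by (simp add: poly_pderiv_K_poly power_0_left)
  ultimately have "(\<Prod>x\<in>#proots ?p. poly (pderiv ?p) x) = 0"
    by force
  then show ?thesis
    using monic_discriminant_eq_prod_pderiv_proots[OF lead_coeff_K_poly[OF assms]] by simp
qed

theorem proposition2p1:
  fixes n :: nat and q :: complex
  assumes "n \<ge> 1"
  shows "discriminant (K_poly n q) =
           of_nat n ^ (2 * n) * q ^ (2 * n - 1) * (q + 2 ^ (2 * n))"
proof (cases "q = 0")
  case True
  then show ?thesis
    using assms by (simp add: discriminant_K_poly_0)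
next
  case False
  have "q ^ (2 * n) = q * q ^ (2 * n - 1)"
    using assms by (simp flip: power_Suc)
  then have "q * discriminant (K_poly n q) = q * (of_nat n ^ (2 * n) * q ^ (2 * n - 1) * (q + 2 ^ (2 * n)))"
    using q_times_discriminant_K_poly[OF assms, of q] by (simp add: mult_ac)
  then show ?thesis
    using False by simp
qed

end
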